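(* If $\Gamma_G$ is population monotonic, then $G$ has no induced subgraph isomorphic to the butterfly graph.
   Context: $G=(V,E;w)$ is a finite simple graph with edge weights $w:E\to\mathbb{R}$, $w_e>0$ for all $e\in E$. The matching game on $G$ is the cooperative game $\Gamma_G=(N,\gamma)$ with player set $N=V$ and, for $S\subseteq N$, $\gamma(S)$ equal to the maximum weight of a matching in the induced subgraph $G[S]$ (so $\gamma(\emptyset)=0$). A population monotonic allocation scheme (PMAS) is a family $(\boldsymbol{x}_S)_{\emptyset\neq S\subseteq N}$ with $\boldsymbol{x}_S=(x_{S,i})_{i\in S}\in\mathbb{R}^S$ such that (efficiency) $\sum_{i\in S}x_{S,i}=\gamma(S)$ for every nonempty $S\subseteq N$, and (monotonicity) $x_{S,i}\le x_{T,i}$ whenever $\emptyset\ne S\subseteq T\subseteq N$ and $i\in S$. $\Gamma_G$ is called population monotonic if it admits a PMAS. The butterfly graph is the graph on vertices $\{1,2,3,4,5\}$ with edge set exactly $\{12,13,23,34,35,45\}$ (two triangles sharing exactly the vertex $3$). *)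

theory Defs
  imports Complex_Main
begin

definition simple_graph :: "'a set \<Rightarrow> 'a set set \<Rightarrow> bool" where
  "simple_graph V E \<longleftrightarrow> finite V \<and>
     (\<forall>e\<in>E. e \<subseteq> V \<and> card e = 2)"

definition matchings_in :: "'a set set \<Rightarrow> 'a set \<Rightarrow> 'a set set set" where
  "matchings_in E S = {M. M \<subseteq> E \<and> (\<forall>e\<in>M. e \<subseteq> S) \<and>
       (\<forall>e\<in>M. \<forall>f\<in>M. e \<noteq> f \<longrightarrow> e \<inter> f = {})}"

definition matching_game :: "'a set set \<Rightarrow> ('a set \<Rightarrow> real) \<Rightarrow> 'a set \<Rightarrow> real" where
  "matching_game E w S = Max ((\<lambda>M. \<Sum>e\<in>M. w e) ` matchings_in E S)"

text \<open>Population monotonic allocation scheme: x S i is the payoff of i in coalition S.\<close>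
definition is_PMAS :: "'a set \<Rightarrow> ('a set \<Rightarrow> real) \<Rightarrow> ('a set \<Rightarrow> 'a \<Rightarrow> real) \<Rightarrow> bool" where
  "is_PMAS N v x \<longleftrightarrow>
     (\<forall>S. S \<subseteq> N \<and> S \<noteq> {} \<longrightarrow> (\<Sum>i\<in>S. x S i) = v S) \<and>
     (\<forall>S T i. S \<noteq> {} \<and> S \<subseteq> T \<and> T \<subseteq> N \<and> i \<in> S \<longrightarrow> x S i \<le> x T i)"

definition population_monotonic :: "'a set \<Rightarrow> ('a set \<Rightarrow> real) \<Rightarrow> bool" where
  "population_monotonic N v \<longleftrightarrow> (\<exists>x. is_PMAS N v x)"

definition butterfly_edges :: "nat set set" where
  "butterfly_edges = {{1,2},{1,3},{2,3},{3,4},{3,5},{4,5}}"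

definition has_induced_butterfly :: "'a set \<Rightarrow> 'a set set \<Rightarrow> bool" where
  "has_induced_butterfly V E \<longleftrightarrow>
     (\<exists>f. f ` {1..5::nat} \<subseteq> V \<and> inj_on f {1..5} \<and>
        (\<forall>i\<in>{1..5}. \<forall>j\<in>{1..5}. i \<noteq> j \<longrightarrow>
           ({f i, f j} \<in> E \<longleftrightarrow> {i, j} \<in> butterfly_edges)))"

end

theory Submission
  imports Defs
begin

text \<open>Let c be the common vertex of the two triangles. In a triangle {p, c, q} at most one edge
  can be matched, so the PMAS payments of the three vertices in {p, c, q} sum to at most the
  heaviest weight; combined with monotonicity from the edge {p, q}, the share of c in the
  heavier of its two triangle edges is strictly below that edge's weight. On an induced path
  p - c - q, monotonicity from the heavier edge {c, q} forces p to receive nothing in {p, c, q},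
  hence nothing in {c, p}, so c takes the full weight of the lighter edge {c, p}. Picking the
  heavier centre edge in each triangle, its endpoints p and q span an induced path, and the two
  statements contradict each other on the lighter of {c, p} and {c, q}.\<close>

lemma is_PMAS_efficient:
  "is_PMAS N v x \<Longrightarrow> S \<subseteq> N \<Longrightarrow> S \<noteq> {} \<Longrightarrow> (\<Sum>i\<in>S. x S i) = v S"
  unfolding is_PMAS_def by blast

lemma is_PMAS_mono:
  "is_PMAS N v x \<Longrightarrow> S \<noteq> {} \<Longrightarrow> S \<subseteq> T \<Longrightarrow> T \<subseteq> N \<Longrightarrow> i \<in> S \<Longrightarrow> x S i \<le> x T i"
  unfolding is_PMAS_def by blast

lemma finite_matchings_in:
  assumes "simple_graph V E"
  shows "finite (matchings_in E S)"
proof -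
  have "finite E"
    using assms unfolding simple_graph_def by (meson Pow_iff finite_Pow_iff finite_subset subsetI)
  moreover have "matchings_in E S \<subseteq> Pow E"
    unfolding matchings_in_def by auto
  ultimately show ?thesis
    by (meson finite_Pow_iff finite_subset)
qed

lemma empty_in_matchings_in: "{} \<in> matchings_in E S"
  unfolding matchings_in_def by auto

lemma matching_game_ge_edge:
  assumes "simple_graph V E" "e \<in> E" "e \<subseteq> S"
  shows "w e \<le> matching_game E w S"
proof -
  have "{e} \<in> matchings_in E S"
    using assms unfolding matchings_in_def by auto
  then have "w e \<in> (\<lambda>M. \<Sum>e\<in>M. w e) ` matchings_in E S"
    by force
  then show ?thesis
    unfolding matching_game_def using finite_matchings_in[OF assms(1)] by simp
qed

text \<open>On at most three vertices two disjoint edges do not fit, so every matching is a single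
  edge or empty.\<close>
lemma matching_game_le_if_card_le_3:
  assumes sg: "simple_graph V E" and "finite S" "card S \<le> 3" "0 \<le> B"
    and bound: "\<And>e. e \<in> E \<Longrightarrow> e \<subseteq> S \<Longrightarrow> w e \<le> B"
  shows "matching_game E w S \<le> B"
proof -
  have "(\<Sum>e\<in>M. w e) \<le> B" if M: "M \<in> matchings_in E S" for M
  proof (cases "M = {}")
    case True
    then show ?thesis using \<open>0 \<le> B\<close> by simp
  next
    case False
    then obtain e where e: "e \<in> M" by blast
    have "M = {e}"
    proof (rule ccontr)
      assume "M \<noteq> {e}"
      then obtain g where g: "g \<in> M" "g \<noteq> e" using e by blast
      have eg: "e \<inter> g = {}" "e \<union> g \<subseteq> S" "e \<in> E" "g \<in> E"
        using M e g unfolding matchings_in_def by blast+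
      then have "card e = 2" "card g = 2"
        using sg unfolding simple_graph_def by auto
      then have "card (e \<union> g) = 4"
        using card_Un_disjoint[OF _ _ eg(1)] card.infinite by fastforce
      moreover have "card (e \<union> g) \<le> card S"
        using eg(2) \<open>finite S\<close> by (simp add: card_mono)
      ultimately show False using \<open>card S \<le> 3\<close> by simp
    qed
    then show ?thesis using bound M e unfolding matchings_in_def by auto
  qed
  then show ?thesis
    unfolding matching_game_def
    using finite_matchings_in[OF sg] empty_in_matchings_in[of E S] by (subst Max_le_iff) auto
qed

lemma edge_subset_triple:
  assumes "simple_graph V E" "e \<in> E" "e \<subseteq> {p, q, r}"
  shows "e = {p, q} \<or> e = {p, r} \<or> e = {q, r}"
proof -
  have "card e = 2" using assms(1,2) unfolding simple_graph_def by auto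
  then obtain s t where st: "e = {s, t}" "s \<noteq> t" by (auto simp: card_2_iff)
  have "s = p \<or> s = q \<or> s = r" "t = p \<or> t = q \<or> t = r" using assms(3) st by auto
  then show ?thesis using st(2) unfolding st(1)
    by (elim disjE) (simp_all add: insert_commute)
qed

lemma PMAS_edge_shares:
  assumes "simple_graph V E" "is_PMAS V (matching_game E w) x"
    and "{i, j} \<in> E" "i \<in> V" "j \<in> V" "i \<noteq> j"
  shows "w {i, j} \<le> x {i, j} i + x {i, j} j"
  using is_PMAS_efficient[OF assms(2), of "{i, j}"] matching_game_ge_edge[OF assms(1,3), of "{i, j}" w]
    assms(4-6) by simp

lemma PMAS_triple_shares:
  assumes "is_PMAS V (matching_game E w) x"
    and "p \<in> V" "c \<in> V" "q \<in> V" "p \<noteq> c" "c \<noteq> q" "p \<noteq> q"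
  shows "x {p, c, q} p + x {p, c, q} c + x {p, c, q} q = matching_game E w {p, c, q}"
  using is_PMAS_efficient[OF assms(1), of "{p, c, q}"] assms(2-7) by simp

lemma PMAS_triangle_heavier_share:
  assumes sg: "simple_graph V E" and pos: "\<forall>e\<in>E. w e > 0"
    and P: "is_PMAS V (matching_game E w) x"
    and V: "p \<in> V" "c \<in> V" "q \<in> V" and d: "p \<noteq> c" "c \<noteq> q" "p \<noteq> q"
    and E: "{c, p} \<in> E" "{c, q} \<in> E" "{p, q} \<in> E"
    and heavier: "w {c, q} \<le> w {c, p}"
  shows "x {c, p} c < w {c, p}"
proof -
  let ?S = "{p, c, q}"
  have "matching_game E w ?S \<le> max (w {p, q}) (w {c, p})"
  proof (rule matching_game_le_if_card_le_3[OF sg])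
    show "0 \<le> max (w {p, q}) (w {c, p})" using pos E by (simp add: le_max_iff_disj less_imp_le)
    fix e assume "e \<in> E" "e \<subseteq> ?S"
    then have "e = {p, c} \<or> e = {p, q} \<or> e = {c, q}" using edge_subset_triple[OF sg] by blast
    then show "w e \<le> max (w {p, q}) (w {c, p})" using heavier by (auto simp: insert_commute)
  qed (use d in auto)
  moreover have "w {p, q} \<le> x {p, q} p + x {p, q} q"
    using PMAS_edge_shares[OF sg P E(3)] V d by simp
  moreover have "x {p, q} p \<le> x ?S p" "x {p, q} q \<le> x ?S q" "x {c, p} c \<le> x ?S c"
    using is_PMAS_mono[OF P] V by auto
  moreover have "w {p, q} > 0" "w {c, p} > 0" using pos E by blast+
  ultimately show ?thesis
    using PMAS_triple_shares[OF P V d] by (auto simp: max_def split: if_splits)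
qed

lemma PMAS_path_lighter_share:
  assumes sg: "simple_graph V E" and pos: "\<forall>e\<in>E. w e > 0"
    and P: "is_PMAS V (matching_game E w) x"
    and V: "p \<in> V" "c \<in> V" "q \<in> V" and d: "p \<noteq> c" "c \<noteq> q" "p \<noteq> q"
    and E: "{c, p} \<in> E" "{c, q} \<in> E" "{p, q} \<notin> E"
    and lighter: "w {c, p} \<le> w {c, q}"
  shows "w {c, p} \<le> x {c, p} c"
proof -
  let ?S = "{p, c, q}"
  have "matching_game E w ?S \<le> w {c, q}"
  proof (rule matching_game_le_if_card_le_3[OF sg])
    show "0 \<le> w {c, q}" using pos E by (simp add: less_imp_le)
    fix e assume "e \<in> E" "e \<subseteq> ?S"
    then have "e = {p, c} \<or> e = {c, q}" using edge_subset_triple[OF sg] E(3) by blast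
    then show "w e \<le> w {c, q}" using lighter by (auto simp: insert_commute)
  qed (use d in auto)
  moreover have "w {c, q} \<le> x {c, q} c + x {c, q} q" "w {c, p} \<le> x {c, p} c + x {c, p} p"
    using PMAS_edge_shares[OF sg P] E V d by auto
  moreover have "x {c, q} c \<le> x ?S c" "x {c, q} q \<le> x ?S q" "x {c, p} p \<le> x ?S p"
    using is_PMAS_mono[OF P] V by auto
  ultimately show ?thesis
    using PMAS_triple_shares[OF P V d] by linarith
qed

lemma PMAS_triangle_center_share:
  assumes "simple_graph V E" "\<forall>e\<in>E. w e > 0" "is_PMAS V (matching_game E w) x"
    and "p \<in> V" "c \<in> V" "q \<in> V" "p \<noteq> c" "c \<noteq> q" "p \<noteq> q"
    and "{c, p} \<in> E" "{c, q} \<in> E" "{p, q} \<in> E"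
  shows "\<exists>r\<in>{p, q}. x {c, r} c < w {c, r}"
proof (cases "w {c, q} \<le> w {c, p}")
  case True
  then show ?thesis using PMAS_triangle_heavier_share[OF assms] by blast
next
  case False
  then have "x {c, q} c < w {c, q}"
    using PMAS_triangle_heavier_share[OF assms(1-3,6,5,4)] assms(7-12) by (simp add: insert_commute)
  then show ?thesis by blast
qed

lemma PMAS_path_center_share:
  assumes "simple_graph V E" "\<forall>e\<in>E. w e > 0" "is_PMAS V (matching_game E w) x"
    and "p \<in> V" "c \<in> V" "q \<in> V" "p \<noteq> c" "c \<noteq> q" "p \<noteq> q"
    and "{c, p} \<in> E" "{c, q} \<in> E" "{p, q} \<notin> E"
  shows "w {c, p} \<le> x {c, p} c \<or> w {c, q} \<le> x {c, q} c"
proof (cases "w {c, p} \<le> w {c, q}")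
  case True
  then show ?thesis using PMAS_path_lighter_share[OF assms] by blast
next
  case False
  then show ?thesis
    using PMAS_path_lighter_share[OF assms(1-3,6,5,4)] assms(7-12) by (simp add: insert_commute)
qed

theorem mainTheorem12:
  fixes V :: "'a set" and E :: "'a set set" and w :: "'a set \<Rightarrow> real"
  assumes "simple_graph V E"
    and "\<forall>e\<in>E. w e > 0"
    and "population_monotonic V (matching_game E w)"
  shows "\<not> has_induced_butterfly V E"
proof
  assume "has_induced_butterfly V E"
  then obtain f where fV: "f ` {1..5::nat} \<subseteq> V" and inj: "inj_on f {1..5}"
    and edge: "\<And>i j. i \<in> {1..5} \<Longrightarrow> j \<in> {1..5} \<Longrightarrow> i \<noteq> j \<Longrightarrow>
                 {f i, f j} \<in> E \<longleftrightarrow> {i, j} \<in> butterfly_edges"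
    unfolding has_induced_butterfly_def by blast
  obtain x where P: "is_PMAS V (matching_game E w) x"
    using assms(3) unfolding population_monotonic_def by blast
  have inV: "f i \<in> V" if "i \<in> {1..5}" for i using fV that by blast
  have dist: "f i \<noteq> f j" if "i \<in> {1..5}" "j \<in> {1..5}" "i \<noteq> j" for i j
    using inj that by (meson inj_on_contraD)
  obtain p where p: "p \<in> {1, 2}" and sp: "x {f 3, f p} (f 3) < w {f 3, f p}"
    using PMAS_triangle_center_share[OF assms(1,2) P, of "f 1" "f 3" "f 2"]
    by (auto simp: inV dist edge butterfly_edges_def doubleton_eq_iff)
  obtain q where q: "q \<in> {4, 5}" and sq: "x {f 3, f q} (f 3) < w {f 3, f q}"
    using PMAS_triangle_center_share[OF assms(1,2) P, of "f 4" "f 3" "f 5"]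
    by (auto simp: inV dist edge butterfly_edges_def doubleton_eq_iff)
  have "w {f 3, f p} \<le> x {f 3, f p} (f 3) \<or> w {f 3, f q} \<le> x {f 3, f q} (f 3)"
    using p q PMAS_path_center_share[OF assms(1,2) P, of "f p" "f 3" "f q"]
    by (auto simp: inV dist edge butterfly_edges_def doubleton_eq_iff)
  then show False using sp sq by linarith
qed

end
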